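(* There is a constant $c>0$ such that for every $n\ge1$, with $N=2^n$, there is a quantum circuit on $n+1$ qubits (one of them an ancilla qubit; plus possibly a constant number of further scratch qubits starting and ending in $|0\rangle$) consisting of at most $c\,n^2$ elementary gates which maps $|0\rangle\otimes v\mapsto|0\rangle\otimes A_N v$ for every $v\in\mathbb{C}^N$. That is, the discrete Hartley transform $A_N$ can be computed with $O(\log^2N)$ elementary operations using one additional ancilla qubit.
   Context: Qubit/basis conventions: the state space of $m$ qubits is $\mathbb{C}^{2^m}$ with computational basis $|x\rangle$ for bit strings $x$ read as binary integers. Elementary gates: (i) a CNOT between any two qubits, and (ii) any single-qubit gate $I_{2^{m-t}}\otimes U\otimes I_{2^{t-1}}$ with $U\in\mathcal U(2)$ arbitrary. The discrete Hartley transform is $A_N=\frac1{\sqrt N}[\mathrm{cas}(2\pi jk/N)]_{j,k=0,\dots,N-1}$ with $\mathrm{cas}(t)=\cos t+\sin t$. *)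

theory Defs
  imports Complex_Main "Jordan_Normal_Form.Matrix"
begin

definition kron :: "complex mat \<Rightarrow> complex mat \<Rightarrow> complex mat" where
  "kron A B = mat (dim_row A * dim_row B) (dim_col A * dim_col B)
     (\<lambda>(i,j). A $$ (i div dim_row B, j div dim_col B) * B $$ (i mod dim_row B, j mod dim_col B))"

definition adj :: "complex mat \<Rightarrow> complex mat" where
  "adj A = mat (dim_col A) (dim_row A) (\<lambda>(i,j). cnj (A $$ (j,i)))"

definition unitary2 :: "complex mat \<Rightarrow> bool" where
  "unitary2 U \<longleftrightarrow> U \<in> carrier_mat 2 2 \<and> U * adj U = 1\<^sub>m 2"

definition bitv :: "nat \<Rightarrow> nat \<Rightarrow> nat" where
  "bitv x b = (x div 2 ^ b) mod 2"

definition single_gate :: "nat \<Rightarrow> nat \<Rightarrow> complex mat \<Rightarrow> complex mat" where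
  "single_gate m t U = kron (kron (1\<^sub>m (2 ^ (m - t))) U) (1\<^sub>m (2 ^ (t - 1)))"

(* CNOT on m qubits with control qubit c and target qubit g (qubit t = bit t-1):
   |x> \<mapsto> |x XOR (bit_c(x) * 2^(g-1))> *)
definition cnot_map :: "nat \<Rightarrow> nat \<Rightarrow> nat \<Rightarrow> nat" where
  "cnot_map c g x = (if bitv x (c - 1) = 1
       then (if bitv x (g - 1) = 1 then x - 2 ^ (g - 1) else x + 2 ^ (g - 1)) else x)"

definition cnot_gate :: "nat \<Rightarrow> nat \<Rightarrow> nat \<Rightarrow> complex mat" where
  "cnot_gate m c g = mat (2 ^ m) (2 ^ m) (\<lambda>(r,s). if r = cnot_map c g s then 1 else 0)"

definition elementary_gate :: "nat \<Rightarrow> complex mat \<Rightarrow> bool" where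
  "elementary_gate m G \<longleftrightarrow>
     (\<exists>c g. 1 \<le> c \<and> c \<le> m \<and> 1 \<le> g \<and> g \<le> m \<and> c \<noteq> g \<and> G = cnot_gate m c g) \<or>
     (\<exists>t U. 1 \<le> t \<and> t \<le> m \<and> unitary2 U \<and> G = single_gate m t U)"

(* matrix of a circuit: gates applied in list order, first gate first *)
definition circuit_mat :: "nat \<Rightarrow> complex mat list \<Rightarrow> complex mat" where
  "circuit_mat m gs = foldl (\<lambda>M G. G * M) (1\<^sub>m (2 ^ m)) gs"

definition hartley :: "nat \<Rightarrow> complex mat" where
  "hartley N = mat N N (\<lambda>(j,k). complex_of_real
      ((cos (2 * pi * real j * real k / real N) + sin (2 * pi * real j * real k / real N)) / sqrt (real N)))"

(* |0...0> \<otimes> v in C^(2^m) for v in C^N, N = 2^n \<le> 2^m: zero padding in high-order qubits *)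
definition embed :: "nat \<Rightarrow> complex vec \<Rightarrow> complex vec" where
  "embed m v = vec (2 ^ m) (\<lambda>i. if i < dim_vec v then v $ i else 0)"

end

theory Submission
  imports Defs
begin

(* Writing F for the inverse DFT (entries e^(-2 pi i jk/N)/sqrt N) and P for the reversal
   j |-> -j mod N, one has A_N = F (alpha I + beta P) with alpha = (1+i)/2, beta = (1-i)/2,
   because cas t = alpha e^(-it) + beta e^(it) and F P is the forward DFT.
   The combination alpha I + beta P is produced with one ancilla: with C the P-gate controlled
   by the ancilla, the sequence H C H S H C H maps |0> v to |0> (alpha v + beta P v).
   Controlled P is a controlled complement (n CNOTs) followed by a controlled increment, since
   -j = (N - 1 - j) + 1; the increment is a controlled phase ladder conjugated by two QFTs.
   The QFT is built recursively (Danielson-Lanczos), each level costing O(n) gates, so every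
   ingredient and the whole circuit use O(n^2) elementary gates. *)

definition circuit_apply :: "complex mat list \<Rightarrow> complex vec \<Rightarrow> complex vec" where
  "circuit_apply gs w = foldl (\<lambda>w G. G *\<^sub>v w) w gs"

lemma circuit_apply_Nil [simp]: "circuit_apply [] w = w"
  by (simp add: circuit_apply_def)

lemma circuit_apply_Cons [simp]: "circuit_apply (G # gs) w = circuit_apply gs (G *\<^sub>v w)"
  by (simp add: circuit_apply_def)

lemma circuit_apply_append [simp]:
  "circuit_apply (gs @ hs) w = circuit_apply hs (circuit_apply gs w)"
  by (simp add: circuit_apply_def)

lemma foldl_mult_mat_mult_vec:
  assumes "\<forall>G\<in>set gs. G \<in> carrier_mat d d" "M \<in> carrier_mat d d" "w \<in> carrier_vec d"
  shows "foldl (\<lambda>M G. G * M) M gs *\<^sub>v w = circuit_apply gs (M *\<^sub>v w)"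
  using assms
proof (induction gs arbitrary: M)
  case (Cons G gs)
  then have "G * M \<in> carrier_mat d d" "(G * M) *\<^sub>v w = G *\<^sub>v (M *\<^sub>v w)"
    by (auto intro: assoc_mult_mat_vec)
  with Cons show ?case by simp
qed simp

lemma circuit_mat_mult_vec:
  assumes "\<forall>G\<in>set gs. G \<in> carrier_mat (2^m) (2^m)" "w \<in> carrier_vec (2^m)"
  shows "circuit_mat m gs *\<^sub>v w = circuit_apply gs w"
  using foldl_mult_mat_mult_vec[OF assms(1) one_carrier_mat assms(2)] assms(2)
  by (simp add: circuit_mat_def)

section \<open>Binary digits of indices\<close>

lemma less_power2_iff_bits: "(x::nat) < 2^m \<longleftrightarrow> (\<forall>i\<ge>m. \<not> bit x i)"
proof -
  have "x < 2^m \<longleftrightarrow> take_bit m x = x"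
    by (simp add: take_bit_nat_eq_self_iff)
  also have "\<dots> \<longleftrightarrow> (\<forall>i\<ge>m. \<not> bit x i)"
    by (simp add: bit_eq_iff bit_take_bit_iff) (meson leI linorder_not_le)
  finally show ?thesis .
qed

lemma div_power2_mod_2_eq_bit: "(x::nat) div 2^q mod 2 = of_bool (bit x q)"
  by (simp add: bit_iff_odd odd_iff_mod_2_eq_one)

lemma bitv_eq_of_bool: "bitv x q = of_bool (bit x q)"
  unfolding bitv_def by (rule div_power2_mod_2_eq_bit)

lemma bit_mult_power2_add:
  assumes "(r::nat) < 2^k"
  shows "bit (a * 2^k + r) i \<longleftrightarrow> (if i < k then bit r i else bit a (i - k))"
proof (cases "i < k")
  case True
  have "a * 2^k + r = r + (a * 2^(k-i)) * 2^i"
    using True by (simp add: algebra_simps flip: power_add)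
  then have "(a * 2^k + r) div 2^i = a * 2^(k-i) + r div 2^i"
    by (simp only: div_mult_self1 power_not_zero zero_neq_numeral not_False_eq_True)
  moreover have "even (a * 2^(k-i))" using True by simp
  ultimately show ?thesis using True by (simp add: bit_iff_odd)
next
  case False
  have "(2::nat)^i = 2^k * 2^(i-k)"
    using False by (simp flip: power_add)
  then have "(a * 2^k + r) div 2^i = (a * 2^k + r) div 2^k div 2^(i-k)"
    by (simp add: div_mult2_eq)
  also have "(a * 2^k + r) div 2^k = a" using assms by simp
  finally show ?thesis using False by (simp add: bit_iff_odd)
qed

lemma bit_div_power2_iff: "bit ((x::nat) div 2^k) i \<longleftrightarrow> bit x (k + i)"
  by (simp add: bit_iff_odd div_exp_eq)

lemma bit_mod_power2_iff: "bit ((x::nat) mod 2^k) i \<longleftrightarrow> i < k \<and> bit x i"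
  by (simp add: bit_take_bit_iff flip: take_bit_eq_mod)

lemma mod_power2_Suc: "(x::nat) mod 2^Suc n = of_bool (bit x n) * 2^n + x mod 2^n"
  using mod_mult2_eq[of x "2^n" 2] by (simp add: div_power2_mod_2_eq_bit mult.commute)

lemma div_mod_power2_recompose:
  "(x::nat) div 2^Suc q * 2^Suc q + of_bool (bit x q) * 2^q + x mod 2^q = x"
  by (metis mod_power2_Suc div_mult_mod_eq add.assoc)

lemma unset_bit_eq_div_mod:
  "unset_bit q (x::nat) = x div 2^Suc q * 2^Suc q + x mod 2^q"
proof (rule bit_eqI)
  fix i
  have r: "x mod 2^q < 2^Suc q"
    by (rule less_le_trans[OF mod_less_divisor]) simp_all
  show "bit (unset_bit q x) i \<longleftrightarrow> bit (x div 2^Suc q * 2^Suc q + x mod 2^q) i"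
    unfolding bit_mult_power2_add[OF r] bit_div_power2_iff
    by (auto simp: bit_mod_power2_iff bit_unset_bit_iff)
qed

lemma set_bit_eq_unset_bit_add: "set_bit q (x::nat) = unset_bit q x + 2^q"
proof -
  have "set_bit q (unset_bit q x) = set_bit q x"
    by (rule bit_eqI) (auto simp: bit_set_bit_iff bit_unset_bit_iff)
  then show ?thesis
    using set_bit_eq[of q "unset_bit q x"] by (simp add: bit_unset_bit_iff)
qed

lemma set_bit_eq_div_mod:
  "set_bit q (x::nat) = x div 2^Suc q * 2^Suc q + 2^q + x mod 2^q"
  unfolding set_bit_eq_unset_bit_add unset_bit_eq_div_mod by simp

lemma eq_unset_bit_or_set_bit_iff:
  "(x::nat) div 2^Suc q = j div 2^Suc q \<and> x mod 2^q = j mod 2^q \<longleftrightarrow>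
     j = unset_bit q x \<or> j = set_bit q x"
proof
  assume "x div 2^Suc q = j div 2^Suc q \<and> x mod 2^q = j mod 2^q"
  then have "x div 2^Suc q * 2^Suc q + of_bool (bit j q) * 2^q + x mod 2^q = j"
    using div_mod_power2_recompose[of j q] by simp
  then show "j = unset_bit q x \<or> j = set_bit q x"
    by (cases "bit j q") (simp_all add: unset_bit_eq_div_mod set_bit_eq_div_mod)
next
  have r: "x mod 2^q < 2^Suc q" "2^q + x mod 2^q < (2::nat)^Suc q"
    by (auto intro: less_le_trans[OF mod_less_divisor])
  have "(a * 2^Suc q + r) div 2^Suc q = a \<and> (a * 2^Suc q + r) mod 2^q = r mod 2^q"
    if "r < 2^Suc q" for a r :: nat
  proof
    show "(a * 2^Suc q + r) div 2^Suc q = a"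
      using that by simp
    have "a * 2^Suc q + r = r + (2 * a) * 2^q"
      by simp
    then show "(a * 2^Suc q + r) mod 2^q = r mod 2^q"
      by (simp only: mod_mult_self1)
  qed
  from this[OF r(1)] this[OF r(2)]
  show "x div 2^Suc q = j div 2^Suc q \<and> x mod 2^q = j mod 2^q"
    if "j = unset_bit q x \<or> j = set_bit q x"
    using that by (auto simp: unset_bit_eq_div_mod set_bit_eq_div_mod add.assoc)
qed

lemma power2_split_at:
  assumes "q < m"
  shows "(2::nat) ^ (m - Suc q) * 2 * 2 ^ q = 2 ^ m"
proof -
  have "(2::nat) ^ (m - Suc q) * 2 * 2 ^ q = 2 ^ (m - Suc q + 1 + q)"
    by (simp add: power_add)
  also have "m - Suc q + 1 + q = m"
    using assms by simp
  finally show ?thesis .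
qed

lemma single_gate_carrier:
  assumes "q < m" "U \<in> carrier_mat 2 2"
  shows "single_gate m (Suc q) U \<in> carrier_mat (2^m) (2^m)"
  using assms power2_split_at[OF assms(1)] unfolding single_gate_def kron_def by auto

lemma single_gate_index:
  assumes "q < m" "U \<in> carrier_mat 2 2" "i < 2^m" "j < 2^m"
  shows "single_gate m (Suc q) U $$ (i, j) =
    (if i div 2^Suc q = j div 2^Suc q \<and> i mod 2^q = j mod 2^q
     then U $$ (of_bool (bit i q), of_bool (bit j q)) else 0)"
proof -
  note dim = power2_split_at[OF assms(1)]
  have d: "y div 2^q div 2 = y div 2^Suc q" for y :: nat
    by (simp only: power_Suc2 div_mult2_eq)
  have bounds: "i div 2^q < 2 ^ (m - Suc q) * 2" "j div 2^q < 2 ^ (m - Suc q) * 2"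
    using assms dim by (simp_all add: less_mult_imp_div_less)
  then have "i div 2^Suc q < 2 ^ (m - Suc q)" "j div 2^Suc q < 2 ^ (m - Suc q)"
    unfolding d[symmetric] by (simp_all add: less_mult_imp_div_less)
  then show ?thesis
    using assms dim bounds unfolding single_gate_def kron_def
    by (auto simp: d div_power2_mod_2_eq_bit)
qed

lemma single_gate_mult_vec:
  assumes "q < m" "U \<in> carrier_mat 2 2"
  shows "single_gate m (Suc q) U *\<^sub>v vec (2^m) f = vec (2^m) (\<lambda>x.
     U $$ (of_bool (bit x q), 0) * f (unset_bit q x) + U $$ (of_bool (bit x q), 1) * f (set_bit q x))"
proof -
  let ?G = "single_gate m (Suc q) U"
  have G: "?G \<in> carrier_mat (2^m) (2^m)"
    using single_gate_carrier[OF assms] .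
  have "(?G *\<^sub>v vec (2^m) f) $ x =
      U $$ (of_bool (bit x q), 0) * f (unset_bit q x) + U $$ (of_bool (bit x q), 1) * f (set_bit q x)"
    if x: "x < 2^m" for x
  proof -
    let ?y0 = "unset_bit q x" and ?y1 = "set_bit q x"
    have "\<forall>i\<ge>m. \<not> bit x i"
      using x less_power2_iff_bits by blast
    then have y: "?y0 < 2^m" "?y1 < 2^m"
      using assms(1) unfolding less_power2_iff_bits by (auto simp: bit_unset_bit_iff bit_set_bit_iff)
    have bits: "\<not> bit ?y0 q" "bit ?y1 q"
      by (simp_all add: bit_unset_bit_iff bit_set_bit_iff)
    have entry: "?G $$ (x, j) =
        (if j = ?y0 \<or> j = ?y1 then U $$ (of_bool (bit x q), of_bool (bit j q)) else 0)"
      if "j < 2^m" for j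
      using single_gate_index[OF assms x that] unfolding eq_unset_bit_or_set_bit_iff .
    have "(?G *\<^sub>v vec (2^m) f) $ x = (\<Sum>j\<in>{0..<2^m}. ?G $$ (x, j) * f j)"
      using G x by (simp add: scalar_prod_def)
    also have "\<dots> = (\<Sum>j\<in>{?y0, ?y1}. ?G $$ (x, j) * f j)"
    proof (rule sum.mono_neutral_right)
      show "\<forall>j\<in>{0..<2^m} - {?y0, ?y1}. ?G $$ (x, j) * f j = 0"
        using entry by auto
    qed (use y in auto)
    also have "\<dots> = ?G $$ (x, ?y0) * f ?y0 + ?G $$ (x, ?y1) * f ?y1"
      using bits by (subst sum.insert) auto
    finally show ?thesis
      using y bits by (simp add: entry)
  qed
  then show ?thesis
    using G by (intro eq_vecI) auto
qed

definition hadamard :: "complex mat" where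
  "hadamard = mat 2 2 (\<lambda>(i, j). if i = 1 \<and> j = 1 then - complex_of_real (1 / sqrt 2)
                                    else complex_of_real (1 / sqrt 2))"

definition phase_shift :: "real \<Rightarrow> complex mat" where
  "phase_shift \<phi> = mat 2 2 (\<lambda>(i, j). if i \<noteq> j then 0 else if i = 0 then 1 else cis \<phi>)"

lemma hadamard_carrier: "hadamard \<in> carrier_mat 2 2"
  by (simp add: hadamard_def)

lemma phase_shift_carrier: "phase_shift \<phi> \<in> carrier_mat 2 2"
  by (simp add: phase_shift_def)

lemma sum_atLeast0_lessThan_2: "(\<Sum>k\<in>{0..<2::nat}. g k) = g 0 + g 1"
  by (simp add: numeral_2_eq_2)

lemma unitary2_hadamard: "unitary2 hadamard"
  unfolding unitary2_def
proof (intro conjI eq_matI)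
  have "complex_of_real (1 / sqrt 2) * complex_of_real (1 / sqrt 2) = 1 / 2"
    by (simp flip: of_real_mult)
  then show "(hadamard * adj hadamard) $$ (i, j) = 1\<^sub>m 2 $$ (i, j)"
    if "i < dim_row (1\<^sub>m 2)" "j < dim_col (1\<^sub>m 2)" for i j
    using that by (auto simp: hadamard_def adj_def scalar_prod_def less_2_cases_iff sum_atLeast0_lessThan_2)
qed (auto simp: hadamard_def adj_def)

lemma unitary2_phase_shift: "unitary2 (phase_shift \<phi>)"
  unfolding unitary2_def
proof (intro conjI eq_matI)
  have "cis \<phi> * cnj (cis \<phi>) = 1"
    by (simp add: cis_cnj cis_mult)
  then show "(phase_shift \<phi> * adj (phase_shift \<phi>)) $$ (i, j) = 1\<^sub>m 2 $$ (i, j)"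
    if "i < dim_row (1\<^sub>m 2)" "j < dim_col (1\<^sub>m 2)" for i j
    using that by (auto simp: phase_shift_def adj_def scalar_prod_def less_2_cases_iff sum_atLeast0_lessThan_2)
qed (auto simp: phase_shift_def adj_def)

lemma set_bit_eq_self: "bit (x::nat) q \<Longrightarrow> set_bit q x = x"
  by (rule bit_eqI) (auto simp: bit_set_bit_iff)

lemma unset_bit_eq_self: "\<not> bit (x::nat) q \<Longrightarrow> unset_bit q x = x"
  by (rule bit_eqI) (auto simp: bit_unset_bit_iff)

lemma single_gate_phase_shift_mult_vec:
  assumes "q < m"
  shows "single_gate m (Suc q) (phase_shift \<phi>) *\<^sub>v vec (2^m) f =
    vec (2^m) (\<lambda>x. (if bit x q then cis \<phi> else 1) * f x)"
  unfolding single_gate_mult_vec[OF assms phase_shift_carrier]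
  by (intro eq_vecI) (auto simp: phase_shift_def set_bit_eq_self unset_bit_eq_self)

lemma single_gate_hadamard_mult_vec:
  assumes "q < m"
  shows "single_gate m (Suc q) hadamard *\<^sub>v vec (2^m) f = vec (2^m) (\<lambda>x.
    complex_of_real (1 / sqrt 2) * (f (unset_bit q x) + (if bit x q then -1 else 1) * f (set_bit q x)))"
  unfolding single_gate_mult_vec[OF assms hadamard_carrier]
  by (intro eq_vecI) (auto simp: hadamard_def algebra_simps)

lemma cnot_map_eq_flip_bit:
  "cnot_map (Suc p) (Suc q) x = (if bit x p then flip_bit q x else x)"
proof -
  have "x - 2^q = unset_bit q x" if "bit x q"
    using set_bit_eq_unset_bit_add[of q x] set_bit_eq_self[OF that] by simp
  moreover have "x + 2^q = set_bit q x" if "\<not> bit x q"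
    using set_bit_eq[of q x] that by simp
  ultimately show ?thesis
    unfolding cnot_map_def bitv_eq_of_bool flip_bit_eq_if by auto
qed

lemma bit_cnot_map_iff:
  "bit (cnot_map (Suc p) (Suc q) x) i \<longleftrightarrow> (if i = q \<and> bit x p then \<not> bit x i else bit x i)"
  unfolding cnot_map_eq_flip_bit by (auto simp: bit_flip_bit_iff)

lemma cnot_map_cnot_map: "p \<noteq> q \<Longrightarrow> cnot_map (Suc p) (Suc q) (cnot_map (Suc p) (Suc q) x) = x"
  by (rule bit_eqI) (auto simp: bit_cnot_map_iff)

lemma cnot_gate_mult_vec:
  assumes "p < m" "q < m" "p \<noteq> q"
  shows "cnot_gate m (Suc p) (Suc q) *\<^sub>v vec (2^m) f =
    vec (2^m) (\<lambda>x. f (cnot_map (Suc p) (Suc q) x))"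
proof -
  let ?c = "cnot_map (Suc p) (Suc q)"
  have "(cnot_gate m (Suc p) (Suc q) *\<^sub>v vec (2^m) f) $ x = f (?c x)" if x: "x < 2^m" for x
  proof -
    have "?c x < 2^m"
      using x assms(2) unfolding less_power2_iff_bits by (auto simp: bit_cnot_map_iff)
    have "x = ?c j \<longleftrightarrow> j = ?c x" for j
      using cnot_map_cnot_map[OF assms(3)] by metis
    then have "(cnot_gate m (Suc p) (Suc q) *\<^sub>v vec (2^m) f) $ x =
        (\<Sum>j\<in>{0..<2^m}. (if j = ?c x then 1 else 0) * f j)"
      using x by (simp add: cnot_gate_def scalar_prod_def)
    also have "\<dots> = (\<Sum>j\<in>{0..<2^m}. if j = ?c x then f j else 0)"
      by (rule sum.cong) auto
    finally show ?thesis
      using \<open>?c x < 2^m\<close> by simp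
  qed
  then show ?thesis
    by (intro eq_vecI) (auto simp: cnot_gate_def)
qed

abbreviation elementary_circuit :: "nat \<Rightarrow> complex mat list \<Rightarrow> bool" where
  "elementary_circuit m gs \<equiv> \<forall>G\<in>set gs. elementary_gate m G"

lemma elementary_gate_single_gate:
  "q < m \<Longrightarrow> unitary2 U \<Longrightarrow> elementary_gate m (single_gate m (Suc q) U)"
  unfolding elementary_gate_def by (intro disjI2 exI[of _ "Suc q"] exI[of _ U]) auto

lemma elementary_gate_cnot_gate:
  "p < m \<Longrightarrow> q < m \<Longrightarrow> p \<noteq> q \<Longrightarrow> elementary_gate m (cnot_gate m (Suc p) (Suc q))"
  unfolding elementary_gate_def by (intro disjI1 exI[of _ "Suc p"] exI[of _ "Suc q"]) auto

lemma elementary_gate_carrier: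
  assumes "elementary_gate m G"
  shows "G \<in> carrier_mat (2^m) (2^m)"
  using assms unfolding elementary_gate_def
proof (elim disjE exE conjE)
  fix t U assume "1 \<le> t" "t \<le> m" "unitary2 U" "G = single_gate m t U"
  then show ?thesis
    using single_gate_carrier[of "t - 1" m U] by (auto simp: unitary2_def)
qed (simp add: cnot_gate_def)

section \<open>The discrete Fourier transform\<close>

definition e2pi :: "real \<Rightarrow> complex" where
  "e2pi r = cis (2 * pi * r)"

lemma e2pi_add: "e2pi (a + b) = e2pi a * e2pi b"
  unfolding e2pi_def by (simp add: cis_mult distrib_left)

lemma e2pi_0 [simp]: "e2pi 0 = 1"
  by (simp add: e2pi_def)

lemma e2pi_of_int [simp]: "e2pi (of_int z) = 1"
  unfolding e2pi_def by simp

lemma e2pi_eq_shift_int: "a = b + of_int z \<Longrightarrow> e2pi a = e2pi b"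
  by (simp add: e2pi_add)

lemma e2pi_power: "e2pi a ^ l = e2pi (real l * a)"
  unfolding e2pi_def by (simp add: DeMoivre mult_ac)

lemma e2pi_eq_1_imp_int:
  assumes "e2pi r = 1"
  obtains k :: int where "r = of_int k"
proof -
  have "cos (2 * pi * r) = 1"
    using assms unfolding e2pi_def by (simp add: complex_eq_iff)
  then obtain k :: int where "2 * pi * r = of_int k * 2 * pi"
    by (auto simp: cos_one_2pi_int)
  then show ?thesis
    using that[of k] by simp
qed

lemma e2pi_half:
  "s = 1 \<or> s = -1 \<Longrightarrow> e2pi (of_int s / 2) = -1"
  unfolding e2pi_def by (auto simp: complex_eq_iff)

lemma sum_e2pi_multiples:
  assumes "N > 0"
  shows "(\<Sum>l<N. e2pi (real l * of_int d / N)) = (if int N dvd d then of_nat N else 0)"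
proof -
  define z where "z = e2pi (of_int d / N)"
  have powers: "e2pi (real l * of_int d / N) = z ^ l" for l
    unfolding z_def e2pi_power by simp
  have "z ^ N = 1"
    unfolding z_def e2pi_power using assms by simp
  moreover have "z = 1 \<longleftrightarrow> int N dvd d"
  proof
    assume "z = 1"
    then obtain k where "of_int d / real N = of_int k"
      unfolding z_def by (rule e2pi_eq_1_imp_int)
    then have "of_int d = (of_int (int N * k) :: real)"
      using assms by (simp add: field_simps)
    then have "d = int N * k"
      by (simp only: of_int_eq_iff)
    then show "int N dvd d" ..
  next
    assume "int N dvd d"
    then obtain k where "d = int N * k" ..
    then show "z = 1"
      unfolding z_def using assms by simp
  qed
  ultimately show ?thesis
    by (cases "z = 1") (simp_all add: powers geometric_sum)
qed

lemma sum_lessThan_double_even_odd: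
  "(\<Sum>k<2 * N. f k) = (\<Sum>k<N. f (2 * k)) + (\<Sum>k<N. f (2 * k + 1))"
  for f :: "nat \<Rightarrow> 'a::comm_monoid_add"
  by (induction N) (simp_all add: algebra_simps)

definition dft :: "int \<Rightarrow> nat \<Rightarrow> (nat \<Rightarrow> complex) \<Rightarrow> nat \<Rightarrow> complex" where
  "dft s N u j = complex_of_real (1 / sqrt N) * (\<Sum>k<N. e2pi (of_int s * real j * real k / N) * u k)"

lemma dft_cong: "(\<And>k. k < N \<Longrightarrow> u k = w k) \<Longrightarrow> dft s N u j = dft s N w j"
  unfolding dft_def by (metis (mono_tags, lifting) lessThan_iff sum.cong)

lemma dft_linear:
  "dft s N (\<lambda>k. a * u k + b * w k) j = a * dft s N u j + b * dft s N w j"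
  unfolding dft_def by (simp add: algebra_simps sum.distrib sum_distrib_left)

lemma dft_reflect:
  assumes "j < N"
  shows "dft s N (\<lambda>k. u ((N - k) mod N)) j = dft (- s) N u j"
proof -
  have "N > 0" using assms by simp
  have neg: "(N - (N - k) mod N) mod N = k" if "k < N" for k
    using that by (cases "k = 0") (auto simp: mod_if)
  have phase: "e2pi (of_int s * real j * real ((N - k) mod N) / N) = e2pi (of_int (- s) * real j * real k / N)"
    if "k < N" for k
  proof (cases "k = 0")
    case False
    then have "(N - k) mod N = N - k"
      using that by simp
    then show ?thesis
      by (intro e2pi_eq_shift_int[where z = "s * int j"])
        (use that \<open>N > 0\<close> in \<open>simp add: of_nat_diff field_simps\<close>)
  qed simp
  have "(\<Sum>k<N. e2pi (of_int s * real j * real k / N) * u ((N - k) mod N)) =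
      (\<Sum>k<N. e2pi (of_int s * real j * real ((N - k) mod N) / N) * u ((N - (N - k) mod N) mod N))"
    by (rule sum.reindex_bij_witness[where i="\<lambda>k. (N - k) mod N" and j="\<lambda>k. (N - k) mod N"])
      (use \<open>N > 0\<close> neg in auto)
  also have "\<dots> = (\<Sum>k<N. e2pi (of_int (- s) * real j * real k / N) * u k)"
    by (rule sum.cong) (simp_all add: neg phase)
  finally show ?thesis
    unfolding dft_def by simp
qed

lemma dft_double:
  assumes s: "s = 1 \<or> s = -1" and "j < N"
  shows "dft s (2 * N) u (of_bool b * N + j) =
    complex_of_real (1 / sqrt 2) * (dft s N (\<lambda>k. u (2 * k)) j +
      (if b then -1 else 1) * e2pi (of_int s * real j / (2 * N)) * dft s N (\<lambda>k. u (2 * k + 1)) j)"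
proof -
  define E where "E k = e2pi (of_int s * real j * real k / N)" for k
  define t where "t = (if b then -1 else 1) * e2pi (of_int s * real j / (2 * N))"
  have "N > 0" using assms by simp
  have even: "e2pi (of_int s * real (of_bool b * N + j) * real (2 * k) / real (2 * N)) = E k" for k
    unfolding E_def using \<open>N > 0\<close>
    by (intro e2pi_eq_shift_int[where z = "s * of_bool b * int k"]) (simp add: field_simps)
  have "e2pi (of_int s * of_bool b / 2) = (if b then -1 else 1)"
    using e2pi_half[OF s] by simp
  then have odd: "e2pi (of_int s * real (of_bool b * N + j) * real (2 * k + 1) / real (2 * N)) = E k * t" for k
  proof -
    have "e2pi (of_int s * real (of_bool b * N + j) * real (2 * k + 1) / real (2 * N)) =
        e2pi (of_int s * real j * real k / N + of_int s * real j / (2 * N) + of_int s * of_bool b / 2)"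
      using \<open>N > 0\<close>
      by (intro e2pi_eq_shift_int[where z = "s * of_bool b * int k"]) (simp add: field_simps)
    then show ?thesis
      using \<open>e2pi (of_int s * of_bool b / 2) = _\<close> by (simp add: E_def t_def e2pi_add)
  qed
  have "complex_of_real (1 / sqrt (real (2 * N))) = complex_of_real (1 / sqrt 2) * complex_of_real (1 / sqrt N)"
    by (simp add: real_sqrt_mult flip: of_real_mult)
  moreover have "(\<Sum>k<N. E k * t * u (2 * k + 1)) = t * (\<Sum>k<N. E k * u (2 * k + 1))"
    by (simp add: sum_distrib_left mult_ac)
  ultimately show ?thesis
    unfolding dft_def sum_lessThan_double_even_odd even odd
    by (simp add: E_def t_def algebra_simps)
qed

lemma int_dvd_iff_eq_mod:
  fixes N k j a :: nat
  assumes "k < N" "j < N" "a \<le> N"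
  shows "int N dvd (int k + int a - int j) \<longleftrightarrow> k = (j + N - a) mod N"
proof -
  have "int k - int (j + N - a) = (int k + int a - int j) - int N"
    using assms by simp
  then have "int N dvd (int k + int a - int j) \<longleftrightarrow> int N dvd (int k - int (j + N - a))"
    by (metis dvd_diff dvd_refl diff_add_cancel dvd_add)
  also have "\<dots> \<longleftrightarrow> int k mod int N = int (j + N - a) mod int N"
    by (simp add: mod_eq_dvd_iff)
  also have "\<dots> \<longleftrightarrow> k mod N = (j + N - a) mod N"
    by (simp flip: of_nat_mod)
  finally show ?thesis
    using assms by simp
qed

lemma dft_inverse_shift:
  assumes "j < N" "a \<le> N"
  shows "dft (-1) N (\<lambda>l. e2pi (real l * real a / N) * dft 1 N u l) j = u ((j + N - a) mod N)"
proof -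
  have "N > 0" using assms by simp
  define c where "c = complex_of_real (1 / sqrt N)"
  define P where "P l k = e2pi (of_int (-1) * real j * real l / N) *
    (e2pi (real l * real a / N) * e2pi (of_int 1 * real l * real k / N))" for l k
  have cc: "c * c = 1 / of_nat N"
    using \<open>N > 0\<close> by (simp add: c_def flip: of_real_mult)
  have phase: "P l k = e2pi (real l * of_int (int k + int a - int j) / N)" for l k
    unfolding P_def e2pi_add [symmetric]
    by (rule arg_cong[where f=e2pi]) (simp add: diff_divide_distrib add_divide_distrib algebra_simps)
  have "dft (-1) N (\<lambda>l. e2pi (real l * real a / N) * dft 1 N u l) j =
      c * (\<Sum>l<N. e2pi (of_int (-1) * real j * real l / N) *
        (e2pi (real l * real a / N) * (c * (\<Sum>k<N. e2pi (of_int 1 * real l * real k / N) * u k))))"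
    by (simp only: dft_def c_def)
  also have "\<dots> = c * c * (\<Sum>l<N. \<Sum>k<N. P l k * u k)"
    unfolding P_def by (simp add: sum_distrib_left mult_ac)
  also have "\<dots> = c * c * (\<Sum>k<N. \<Sum>l<N. P l k * u k)"
    by (rule arg_cong[where f="(*) (c * c)"], rule sum.swap)
  also have "\<dots> =
      c * c * (\<Sum>k<N. (\<Sum>l<N. e2pi (real l * of_int (int k + int a - int j) / N)) * u k)"
    unfolding phase by (simp add: sum_distrib_right)
  also have "\<dots> = c * c * (\<Sum>k<N. (if k = (j + N - a) mod N then of_nat N else 0) * u k)"
  proof -
    have "(\<Sum>l<N. e2pi (real l * of_int (int k + int a - int j) / N)) =
        (if k = (j + N - a) mod N then of_nat N else 0)" if "k < N" for k
      unfolding sum_e2pi_multiples[OF \<open>N > 0\<close>] int_dvd_iff_eq_mod[OF that assms] ..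
    then show ?thesis
      by (intro arg_cong[where f="(*) (c * c)"] sum.cong) simp_all
  qed
  also have "\<dots> = c * c * (\<Sum>k<N. if k = (j + N - a) mod N then of_nat N * u k else 0)"
    by (intro arg_cong[where f="(*) (c * c)"] sum.cong) simp_all
  also have "\<dots> = u ((j + N - a) mod N)"
    using \<open>N > 0\<close> by (simp add: cc)
  finally show ?thesis .
qed

lemma e2pi_combination_eq_cas:
  "(1 + \<i>) / 2 * e2pi (- a) + (1 - \<i>) / 2 * e2pi a =
    complex_of_real (cos (2 * pi * a) + sin (2 * pi * a))"
  unfolding e2pi_def by (simp add: complex_eq_iff field_simps)

lemma sum_linear_combination:
  "(\<Sum>k\<in>S. (a * f k + b * g k) * w k) = a * (\<Sum>k\<in>S. f k * w k) + b * (\<Sum>k\<in>S. g k * w k)"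
  for a b :: "'a::comm_ring"
  by (simp add: sum.distrib sum_distrib_left algebra_simps)

lemma hartley_mult_vec_eq_dft:
  assumes "j < N" "v \<in> carrier_vec N"
  shows "(hartley N *\<^sub>v v) $ j =
    dft (-1) N (\<lambda>k. (1 + \<i>) / 2 * v $ k + (1 - \<i>) / 2 * v $ ((N - k) mod N)) j"
proof -
  define c where "c = complex_of_real (1 / sqrt N)"
  have entry: "hartley N $$ (j, k) =
      (1 + \<i>) / 2 * (c * e2pi (of_int (-1) * real j * real k / N)) +
      (1 - \<i>) / 2 * (c * e2pi (of_int 1 * real j * real k / N))" if "k < N" for k
  proof -
    have "hartley N $$ (j, k) =
        c * complex_of_real (cos (2 * pi * (real j * real k / N)) + sin (2 * pi * (real j * real k / N)))"
      using assms(1) that by (simp add: hartley_def c_def mult.assoc flip: of_real_mult)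
    also have "\<dots> = (1 + \<i>) / 2 * (c * e2pi (- (real j * real k / N))) +
        (1 - \<i>) / 2 * (c * e2pi (real j * real k / N))"
      unfolding e2pi_combination_eq_cas[symmetric] by (simp add: algebra_simps)
    finally show ?thesis
      by simp
  qed
  have "(hartley N *\<^sub>v v) $ j = (\<Sum>k<N. hartley N $$ (j, k) * v $ k)"
    using assms by (simp add: hartley_def scalar_prod_def lessThan_atLeast0)
  also have "\<dots> = (\<Sum>k<N. ((1 + \<i>) / 2 * (c * e2pi (of_int (-1) * real j * real k / N)) +
      (1 - \<i>) / 2 * (c * e2pi (of_int 1 * real j * real k / N))) * v $ k)"
    using entry by (intro sum.cong) auto
  also have "\<dots> = (1 + \<i>) / 2 * dft (-1) N (($) v) j + (1 - \<i>) / 2 * dft 1 N (($) v) j"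
    unfolding sum_linear_combination dft_def c_def by (simp add: sum_distrib_left mult.assoc)
  also have "\<dots> = dft (-1) N (\<lambda>k. (1 + \<i>) / 2 * v $ k + (1 - \<i>) / 2 * v $ ((N - k) mod N)) j"
    unfolding dft_linear dft_reflect[OF assms(1)] by simp
  finally show ?thesis .
qed

(* The three phases add up to (theta/2) (b_p + b_q - (b_p XOR b_q)) = theta b_p b_q. *)
definition controlled_phase :: "nat \<Rightarrow> real \<Rightarrow> nat \<Rightarrow> nat \<Rightarrow> complex mat list" where
  "controlled_phase m \<theta> p q =
     [single_gate m (Suc p) (phase_shift (\<theta> / 2)), single_gate m (Suc q) (phase_shift (\<theta> / 2)),
      cnot_gate m (Suc p) (Suc q), single_gate m (Suc q) (phase_shift (- \<theta> / 2)),
      cnot_gate m (Suc p) (Suc q)]"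

lemma controlled_phase_apply:
  assumes "p < m" "q < m" "p \<noteq> q"
  shows "circuit_apply (controlled_phase m \<theta> p q) (vec (2^m) f) =
    vec (2^m) (\<lambda>x. (if bit x p \<and> bit x q then cis \<theta> else 1) * f x)"
proof -
  let ?c = "cnot_map (Suc p) (Suc q)"
  have "bit (?c x) q \<longleftrightarrow> bit x q \<noteq> bit x p" "bit (?c x) p \<longleftrightarrow> bit x p" for x
    using assms(3) by (auto simp: bit_cnot_map_iff)
  moreover have "\<theta> / 2 + \<theta> / 2 = \<theta>"
    by simp
  ultimately show ?thesis
    using assms unfolding controlled_phase_def
    by (auto simp: single_gate_phase_shift_mult_vec cnot_gate_mult_vec cnot_map_cnot_map
        cis_mult mult.assoc[symmetric] intro!: eq_vecI)
qed

definition swap_bits :: "nat \<Rightarrow> nat \<Rightarrow> nat \<Rightarrow> nat" where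
  "swap_bits p q x = cnot_map (Suc p) (Suc q) (cnot_map (Suc q) (Suc p) (cnot_map (Suc p) (Suc q) x))"

definition swap_circuit :: "nat \<Rightarrow> nat \<Rightarrow> nat \<Rightarrow> complex mat list" where
  "swap_circuit m p q = [cnot_gate m (Suc p) (Suc q), cnot_gate m (Suc q) (Suc p), cnot_gate m (Suc p) (Suc q)]"

lemma swap_circuit_apply:
  "p < m \<Longrightarrow> q < m \<Longrightarrow> p \<noteq> q \<Longrightarrow>
    circuit_apply (swap_circuit m p q) (vec (2^m) f) = vec (2^m) (\<lambda>x. f (swap_bits p q x))"
  unfolding swap_circuit_def swap_bits_def by (simp add: cnot_gate_mult_vec)

lemma bit_swap_bits_iff:
  "p \<noteq> q \<Longrightarrow> bit (swap_bits p q x) i \<longleftrightarrow> bit x (if i = p then q else if i = q then p else i)"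
  unfolding swap_bits_def by (auto simp: bit_cnot_map_iff)

fun rotate_circuit :: "nat \<Rightarrow> nat \<Rightarrow> complex mat list" where
  "rotate_circuit m 0 = []"
| "rotate_circuit m (Suc n) = rotate_circuit m n @ swap_circuit m n (Suc n)"

fun rotate_bits :: "nat \<Rightarrow> nat \<Rightarrow> nat" where
  "rotate_bits 0 x = x"
| "rotate_bits (Suc n) x = rotate_bits n (swap_bits n (Suc n) x)"

lemma rotate_circuit_apply:
  "n < m \<Longrightarrow> circuit_apply (rotate_circuit m n) (vec (2^m) f) = vec (2^m) (\<lambda>x. f (rotate_bits n x))"
  by (induction n arbitrary: f) (simp_all add: swap_circuit_apply)

lemma bit_rotate_bits_iff:
  "bit (rotate_bits n x) i \<longleftrightarrow> bit x (if i = 0 then n else if i \<le> n then i - 1 else i)"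
proof (induction n arbitrary: x)
  case (Suc n)
  show ?case
    unfolding rotate_bits.simps Suc.IH
    by (cases "i = 0"; cases "i \<le> n"; cases "i = Suc n") (auto simp: bit_swap_bits_iff)
qed simp

lemma bit_double_add_iff:
  assumes "(c::nat) < 2"
  shows "bit (2 * k + c) i \<longleftrightarrow> (if i = 0 then c = 1 else bit k (i - 1))"
proof -
  have "c < 2^1" "bit c i \<longleftrightarrow> i = 0 \<and> c = 1" for i
    using assms by (auto simp: less_2_cases_iff bit_1_iff bit_Suc_0_iff)
  then show ?thesis
    using bit_mult_power2_add[of c 1 k i] by (simp add: mult.commute)
qed

lemma rotate_bits_eq:
  assumes "c < 2" "k < 2^n"
  shows "rotate_bits n ((2 * h + c) * 2^n + k) = h * 2^Suc n + (2 * k + c)"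
proof (rule bit_eqI)
  fix i
  have low: "2 * k + c < 2^Suc n"
    using assms by simp
  have "bit (h * 2^Suc n + (2 * k + c)) i \<longleftrightarrow>
      (if i = 0 then c = 1 else if i < Suc n then bit k (i - 1) else bit h (i - Suc n))"
    unfolding bit_mult_power2_add[OF low] by (simp add: bit_double_add_iff assms(1))
  moreover have "bit ((2 * h + c) * 2^n + k) j \<longleftrightarrow>
      (if j < n then bit k j else if j = n then c = 1 else bit h (j - Suc n))" for j
    using assms by (simp add: bit_mult_power2_add bit_double_add_iff)
  ultimately show "bit (rotate_bits n ((2 * h + c) * 2^n + k)) i \<longleftrightarrow>
      bit (h * 2^Suc n + (2 * k + c)) i"
    unfolding bit_rotate_bits_iff by auto
qed

definition phase_ladder :: "nat \<Rightarrow> real \<Rightarrow> nat \<Rightarrow> nat \<Rightarrow> complex mat list" where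
  "phase_ladder m a n k = concat (map (\<lambda>b. controlled_phase m (2 * pi * a * 2^b) b n) [0..<k])"

lemma phase_ladder_apply:
  assumes "k \<le> n" "n < m"
  shows "circuit_apply (phase_ladder m a n k) (vec (2^m) f) =
    vec (2^m) (\<lambda>x. (if bit x n then e2pi (a * real (x mod 2^k)) else 1) * f x)"
  using assms(1)
proof (induction k)
  case 0
  show ?case
    by (simp add: phase_ladder_def vec_eq_iff)
next
  case (Suc k)
  have step: "(if bit x k \<and> bit x n then cis (2 * pi * a * 2^k) else 1) *
      (if bit x n then e2pi (a * real (x mod 2^k)) else 1) =
      (if bit x n then e2pi (a * real (x mod 2^Suc k)) else 1)" for x
  proof -
    have "e2pi (a * real (x mod 2^Suc k)) =
        (if bit x k then e2pi (a * 2^k) else 1) * e2pi (a * real (x mod 2^k))"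
      unfolding mod_power2_Suc by (simp add: distrib_left e2pi_add)
    then show ?thesis
      by (simp add: e2pi_def mult.assoc)
  qed
  have "circuit_apply (phase_ladder m a n (Suc k)) (vec (2^m) f) =
      circuit_apply (controlled_phase m (2 * pi * a * 2^k) k n)
        (circuit_apply (phase_ladder m a n k) (vec (2^m) f))"
    by (simp add: phase_ladder_def)
  also have "\<dots> = vec (2^m) (\<lambda>x. (if bit x n then e2pi (a * real (x mod 2^Suc k)) else 1) * f x)"
    using Suc assms(2) by (simp add: controlled_phase_apply step mult.assoc[symmetric])
  finally show ?case .
qed

section \<open>The quantum Fourier transform\<close>

definition block_dft :: "int \<Rightarrow> nat \<Rightarrow> (nat \<Rightarrow> complex) \<Rightarrow> nat \<Rightarrow> complex" where
  "block_dft s n f x = dft s (2^n) (\<lambda>k. f (x div 2^n * 2^n + k)) (x mod 2^n)"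

lemma block_dft_block:
  "j < 2^n \<Longrightarrow> block_dft s n f (a * 2^n + j) = dft s (2^n) (\<lambda>k. f (a * 2^n + k)) j"
  by (simp add: block_dft_def)

lemma block_dft_Suc:
  fixes f :: "nat \<Rightarrow> complex" and n :: nat
  assumes "s = 1 \<or> s = -1"
  defines "t \<equiv> \<lambda>y. (if bit y n then e2pi (of_int s / 2^Suc n * real (y mod 2^n)) else 1) *
    block_dft s n (\<lambda>z. f (rotate_bits n z)) y"
  shows "block_dft s (Suc n) f x =
    complex_of_real (1 / sqrt 2) * (t (unset_bit n x) + (if bit x n then -1 else 1) * t (set_bit n x))"
proof -
  define N :: nat where "N = 2^n"
  define h where "h = x div 2^Suc n"
  define j where "j = x mod N"
  have j: "j < N"
    by (simp add: j_def N_def)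
  have unset: "unset_bit n x = (2 * h + 0) * N + j" and set: "set_bit n x = (2 * h + 1) * N + j"
    by (simp_all add: unset_bit_eq_div_mod set_bit_eq_div_mod h_def j_def N_def algebra_simps)
  have bits: "\<not> bit (unset_bit n x) n" "bit (set_bit n x) n"
    by (simp_all add: bit_unset_bit_iff bit_set_bit_iff)
  have blk: "block_dft s n (\<lambda>z. f (rotate_bits n z)) ((2 * h + c) * N + j) =
      dft s N (\<lambda>k. f (h * (2 * N) + (2 * k + c))) j" if "c < 2" for c
    using j that unfolding N_def block_dft_block[OF j[unfolded N_def]]
    by (intro dft_cong) (simp add: rotate_bits_eq)
  have "set_bit n x mod N = j"
    unfolding set using j by (metis mod_less mod_mult_self3)
  moreover have "e2pi (of_int s / 2^Suc n * real j) = e2pi (of_int s * real j / (2 * N))"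
    by (simp add: N_def)
  ultimately have t0: "t (unset_bit n x) = dft s N (\<lambda>k. f (h * (2 * N) + 2 * k)) j"
    and t1: "t (set_bit n x) =
      e2pi (of_int s * real j / (2 * N)) * dft s N (\<lambda>k. f (h * (2 * N) + (2 * k + 1))) j"
    using blk[of 0] blk[of 1] bits unfolding t_def N_def[symmetric] unset set by simp_all
  have "block_dft s (Suc n) f x = dft s (2 * N) (\<lambda>k. f (h * (2 * N) + k)) (of_bool (bit x n) * N + j)"
    unfolding block_dft_def mod_power2_Suc by (simp add: h_def j_def N_def)
  also have "\<dots> = complex_of_real (1 / sqrt 2) *
      (t (unset_bit n x) + (if bit x n then -1 else 1) * t (set_bit n x))"
    unfolding dft_double[OF assms(1) j] t0 t1 by (simp add: algebra_simps)
  finally show ?thesis .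
qed

(* Danielson-Lanczos: the rotation moves the parity bit of the summation index to position n,
   so the recursive call transforms the even and the odd half separately; the phase ladder
   supplies the twiddle factors and the Hadamard gate on qubit n is the butterfly. *)
fun qft_circuit :: "nat \<Rightarrow> int \<Rightarrow> nat \<Rightarrow> complex mat list" where
  "qft_circuit m s 0 = []"
| "qft_circuit m s (Suc n) = rotate_circuit m n @ qft_circuit m s n @
     phase_ladder m (of_int s / 2^Suc n) n n @ [single_gate m (Suc n) hadamard]"

lemma qft_circuit_apply:
  assumes "n \<le> m" "s = 1 \<or> s = -1"
  shows "circuit_apply (qft_circuit m s n) (vec (2^m) f) = vec (2^m) (block_dft s n f)"
  using assms(1)
proof (induction n arbitrary: f)
  case 0
  show ?case
    by (simp add: block_dft_def dft_def vec_eq_iff)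
next
  case (Suc n)
  then have "n < m" by simp
  have "circuit_apply (qft_circuit m s (Suc n)) (vec (2^m) f) =
      single_gate m (Suc n) hadamard *\<^sub>v circuit_apply (phase_ladder m (of_int s / 2^Suc n) n n)
        (circuit_apply (qft_circuit m s n) (circuit_apply (rotate_circuit m n) (vec (2^m) f)))"
    by simp
  also have "\<dots> = single_gate m (Suc n) hadamard *\<^sub>v vec (2^m) (\<lambda>y.
      (if bit y n then e2pi (of_int s / 2^Suc n * real (y mod 2^n)) else 1) *
      block_dft s n (\<lambda>z. f (rotate_bits n z)) y)"
    unfolding rotate_circuit_apply[OF \<open>n < m\<close>] Suc.IH[OF less_imp_le[OF \<open>n < m\<close>]]
      phase_ladder_apply[OF order.refl \<open>n < m\<close>] ..
  also have "\<dots> = vec (2^m) (block_dft s (Suc n) f)"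
    unfolding single_gate_hadamard_mult_vec[OF \<open>n < m\<close>] block_dft_Suc[OF assms(2)] ..
  finally show ?case .
qed

section \<open>Controlled negation modulo 2^n\<close>

lemma bit_block_index:
  "(l::nat) < 2^n \<Longrightarrow> bit (x div 2^n * 2^n + l) n \<longleftrightarrow> bit x n"
  by (simp add: bit_mult_power2_add bit_div_power2_iff)

lemma block_dft_controlled_shift:
  "block_dft (-1) n (\<lambda>y. (if bit y n then e2pi (1 / 2^n * real (y mod 2^n)) else 1) * block_dft 1 n f y) =
    (\<lambda>x. f (x div 2^n * 2^n + (x mod 2^n + 2^n - of_bool (bit x n)) mod 2^n))"
proof
  fix x :: nat
  let ?A = "x div 2^n"
  have "(if bit (?A * 2^n + l) n then e2pi (1 / 2^n * real ((?A * 2^n + l) mod 2^n)) else 1) *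
      block_dft 1 n f (?A * 2^n + l) =
      e2pi (real l * real (of_bool (bit x n)) / real (2^n)) * dft 1 (2^n) (\<lambda>k. f (?A * 2^n + k)) l"
    if "l < 2^n" for l
    using that bit_block_index[OF that, of x] by (simp add: block_dft_block)
  then have "block_dft (-1) n (\<lambda>y. (if bit y n then e2pi (1 / 2^n * real (y mod 2^n)) else 1) *
      block_dft 1 n f y) x =
      dft (-1) (2^n) (\<lambda>l. e2pi (real l * real (of_bool (bit x n)) / real (2^n)) *
        dft 1 (2^n) (\<lambda>k. f (?A * 2^n + k)) l) (x mod 2^n)"
    unfolding block_dft_def[of "-1"] by (rule dft_cong)
  also have "\<dots> = f (?A * 2^n + (x mod 2^n + 2^n - of_bool (bit x n)) mod 2^n)"
    by (rule dft_inverse_shift) simp_all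
  finally show "block_dft (-1) n (\<lambda>y. (if bit y n then e2pi (1 / 2^n * real (y mod 2^n)) else 1) *
      block_dft 1 n f y) x = f (?A * 2^n + (x mod 2^n + 2^n - of_bool (bit x n)) mod 2^n)" .
qed

definition controlled_increment :: "nat \<Rightarrow> nat \<Rightarrow> complex mat list" where
  "controlled_increment m n =
     qft_circuit m 1 n @ phase_ladder m (1 / 2^n) n n @ qft_circuit m (-1) n"

(* Amplitudes are pulled back: |y> is moved to |y + b> on the low n qubits, b being bit n. *)
lemma controlled_increment_apply:
  assumes "n < m"
  shows "circuit_apply (controlled_increment m n) (vec (2^m) f) =
    vec (2^m) (\<lambda>x. f (x div 2^n * 2^n + (x mod 2^n + 2^n - of_bool (bit x n)) mod 2^n))"
  unfolding controlled_increment_def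
  using assms by (simp add: qft_circuit_apply phase_ladder_apply block_dft_controlled_shift)

definition controlled_complement :: "nat \<Rightarrow> nat \<Rightarrow> nat \<Rightarrow> complex mat list" where
  "controlled_complement m n k = map (\<lambda>b. cnot_gate m (Suc n) (Suc b)) [0..<k]"

lemma controlled_complement_apply:
  assumes "k \<le> n" "n < m"
  shows "circuit_apply (controlled_complement m n k) (vec (2^m) f) =
    vec (2^m) (\<lambda>x. f (if bit x n then xor x (mask k) else x))"
  using assms(1)
proof (induction k)
  case 0
  show ?case
    by (simp add: controlled_complement_def cong: if_cong)
next
  case (Suc k)
  have "(if bit (cnot_map (Suc n) (Suc k) x) n then xor (cnot_map (Suc n) (Suc k) x) (mask k)
      else cnot_map (Suc n) (Suc k) x) = (if bit x n then xor x (mask (Suc k)) else x)" for x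
    using Suc.prems by (intro bit_eqI) (auto simp: bit_cnot_map_iff bit_xor_iff bit_mask_iff)
  then show ?case
    using Suc assms(2) by (simp add: controlled_complement_def cnot_gate_mult_vec)
qed

lemma bit_power2_minus_1_minus_iff:
  assumes "(r::nat) < 2^n"
  shows "bit (2^n - 1 - r) i \<longleftrightarrow> i < n \<and> \<not> bit r i"
proof -
  define z :: nat where "z = xor r (mask n)"
  have r: "bit r i \<Longrightarrow> i < n" for i
    using assms by (meson less_power2_iff_bits not_le)
  have z: "bit z i \<longleftrightarrow> i < n \<and> \<not> bit r i" for i
    unfolding z_def using r[of i] by (auto simp: bit_xor_iff bit_mask_iff)
  have "r + z = mask n"
    by (rule bit_eqI) (use z r in \<open>auto simp: bit_disjunctive_add_iff bit_mask_iff\<close>)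
  then have "z = 2^n - 1 - r"
    by (simp add: mask_eq_exp_minus_1)
  then show ?thesis
    using z by simp
qed

lemma xor_mask_block:
  assumes "(r::nat) < 2^n"
  shows "xor (a * 2^n + r) (mask n) = a * 2^n + (2^n - 1 - r)"
proof (rule bit_eqI)
  fix i
  have low: "2^n - 1 - r < (2::nat)^n"
    using assms by simp
  show "bit (xor (a * 2^n + r) (mask n)) i \<longleftrightarrow> bit (a * 2^n + (2^n - 1 - r)) i"
    unfolding bit_xor_iff bit_mult_power2_add[OF low] bit_mult_power2_add[OF assms]
    using bit_power2_minus_1_minus_iff[OF assms, of i] by (simp add: bit_mask_iff)
qed

lemma complement_of_predecessor_mod:
  assumes "(j::nat) < N"
  shows "N - 1 - (j + N - 1) mod N = (N - j) mod N"
proof (cases "j = 0")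
  case False
  then have "(j + N - 1) mod N = j - 1"
    using assms by (simp add: mod_if)
  then show ?thesis
    using assms False by simp
qed (use assms in simp)

definition controlled_negation :: "nat \<Rightarrow> nat \<Rightarrow> complex mat list" where
  "controlled_negation m n = controlled_complement m n n @ controlled_increment m n"

lemma controlled_negation_apply:
  assumes "n < m"
  shows "circuit_apply (controlled_negation m n) (vec (2^m) f) =
    vec (2^m) (\<lambda>x. f (if bit x n then x div 2^n * 2^n + (2^n - x mod 2^n) mod 2^n else x))"
proof -
  have "(if bit y n then xor y (mask n) else y) =
      (if bit x n then x div 2^n * 2^n + (2^n - x mod 2^n) mod 2^n else x)"
    if "y = x div 2^n * 2^n + (x mod 2^n + 2^n - of_bool (bit x n)) mod 2^n" for x y :: nat
  proof -
    define N :: nat where "N = 2^n"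
    define j where "j = x mod N"
    have "j < N" "0 < N"
      by (simp_all add: j_def N_def)
    have "bit y n \<longleftrightarrow> bit x n"
      unfolding that by (rule bit_block_index) simp
    moreover have "N - 1 - (j + N - 1) mod N = (N - j) mod N"
      using \<open>j < N\<close> by (rule complement_of_predecessor_mod)
    ultimately show ?thesis
      unfolding that N_def[symmetric] j_def[symmetric]
      by (simp add: xor_mask_block \<open>0 < N\<close> j_def N_def div_mult_mod_eq)
  qed
  then show ?thesis
    unfolding controlled_negation_def
    using assms by (simp add: controlled_complement_apply controlled_increment_apply)
qed

section \<open>The Hartley circuit\<close>

(* The amplitudes of |0> u0 + |1> u1 with the ancilla as bit n; higher bits are ignored. *)
definition ancilla_sum :: "nat \<Rightarrow> (nat \<Rightarrow> complex) \<Rightarrow> (nat \<Rightarrow> complex) \<Rightarrow> nat \<Rightarrow> complex" where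
  "ancilla_sum n u0 u1 x = (if bit x n then u1 (x mod 2^n) else u0 (x mod 2^n))"

lemma ancilla_sum_cong:
  "(\<And>j. j < 2^n \<Longrightarrow> u0 j = w0 j) \<Longrightarrow> (\<And>j. j < 2^n \<Longrightarrow> u1 j = w1 j) \<Longrightarrow>
    ancilla_sum n u0 u1 = ancilla_sum n w0 w1"
  by (auto simp: ancilla_sum_def)

lemma embed_eq_ancilla_sum:
  assumes "dim_vec v = 2^n"
  shows "embed (Suc n) v = vec (2^Suc n) (ancilla_sum n (($) v) (\<lambda>_. 0))"
proof (rule eq_vecI)
  fix x assume "x < dim_vec (vec (2^Suc n) (ancilla_sum n (($) v) (\<lambda>_. 0)))"
  then have "x < 2^Suc n" by simp
  then have "of_bool (bit x n) * 2^n + x mod 2^n = x"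
    using mod_power2_Suc[of x n] by simp
  moreover have "x mod 2^n < 2^n"
    by simp
  ultimately have "x < 2^n \<longleftrightarrow> \<not> bit x n"
    by (cases "bit x n") auto
  then show "embed (Suc n) v $ x = vec (2^Suc n) (ancilla_sum n (($) v) (\<lambda>_. 0)) $ x"
    using \<open>x < 2^Suc n\<close> assms by (auto simp: embed_def ancilla_sum_def)
qed (simp add: embed_def)

lemma ancilla_sum_unset_set:
  "ancilla_sum n u0 u1 (unset_bit n x) = u0 (x mod 2^n)"
  "ancilla_sum n u0 u1 (set_bit n x) = u1 (x mod 2^n)"
  by (simp_all add: ancilla_sum_def bit_unset_bit_iff bit_set_bit_iff
      take_bit_unset_bit_eq take_bit_set_bit_eq flip: take_bit_eq_mod)

lemma single_gate_hadamard_ancilla_sum: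
  assumes "n < m"
  shows "single_gate m (Suc n) hadamard *\<^sub>v vec (2^m) (ancilla_sum n u0 u1) =
    vec (2^m) (ancilla_sum n (\<lambda>j. complex_of_real (1 / sqrt 2) * (u0 j + u1 j))
                             (\<lambda>j. complex_of_real (1 / sqrt 2) * (u0 j - u1 j)))"
  unfolding single_gate_hadamard_mult_vec[OF assms] ancilla_sum_unset_set
  by (intro eq_vecI) (simp_all add: ancilla_sum_def)

lemma single_gate_phase_shift_ancilla_sum:
  assumes "n < m"
  shows "single_gate m (Suc n) (phase_shift \<phi>) *\<^sub>v vec (2^m) (ancilla_sum n u0 u1) =
    vec (2^m) (ancilla_sum n u0 (\<lambda>j. cis \<phi> * u1 j))"
  unfolding single_gate_phase_shift_mult_vec[OF assms]
  by (intro eq_vecI) (simp_all add: ancilla_sum_def)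

lemma controlled_negation_ancilla_sum:
  assumes "n < m"
  shows "circuit_apply (controlled_negation m n) (vec (2^m) (ancilla_sum n u0 u1)) =
    vec (2^m) (ancilla_sum n u0 (\<lambda>j. u1 ((2^n - j) mod 2^n)))"
  unfolding controlled_negation_apply[OF assms]
  by (intro eq_vecI) (simp_all add: ancilla_sum_def bit_block_index)

lemma block_dft_ancilla_sum:
  "block_dft s n (ancilla_sum n u0 u1) = ancilla_sum n (dft s (2^n) u0) (dft s (2^n) u1)"
proof
  fix x
  have "dft s (2^n) (\<lambda>k. ancilla_sum n u0 u1 (x div 2^n * 2^n + k)) (x mod 2^n) =
      (if bit x n then dft s (2^n) u1 (x mod 2^n) else dft s (2^n) u0 (x mod 2^n))"
    by (auto intro: dft_cong simp: ancilla_sum_def bit_block_index)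
  then show "block_dft s n (ancilla_sum n u0 u1) x = ancilla_sum n (dft s (2^n) u0) (dft s (2^n) u1) x"
    by (simp add: block_dft_def ancilla_sum_def)
qed

definition hartley_mixer :: "nat \<Rightarrow> nat \<Rightarrow> complex mat list" where
  "hartley_mixer m n =
     [single_gate m (Suc n) hadamard] @ controlled_negation m n @
     [single_gate m (Suc n) hadamard, single_gate m (Suc n) (phase_shift (pi / 2)),
      single_gate m (Suc n) hadamard] @
     controlled_negation m n @ [single_gate m (Suc n) hadamard]"

lemma hartley_mixer_apply:
  assumes "n < m"
  shows "circuit_apply (hartley_mixer m n) (vec (2^m) (ancilla_sum n u (\<lambda>_. 0))) =
    vec (2^m) (ancilla_sum n
      (\<lambda>j. (1 + \<i>) / 2 * u j + (1 - \<i>) / 2 * u ((2^n - j) mod 2^n)) (\<lambda>_. 0))"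
proof -
  define c where "c = complex_of_real (1 / sqrt 2)"
  define P where "P j = (2^n - j) mod 2^n" for j :: nat
  have cc: "c * (c * z) = z / 2" for z
    by (simp add: c_def mult.assoc[symmetric] flip: of_real_mult)
  have PP: "P (P j) = j" if "j < 2^n" for j
    using that unfolding P_def by (cases "j = 0") (auto simp: mod_if)
  note H = single_gate_hadamard_ancilla_sum[OF assms, folded c_def]
  note S = single_gate_phase_shift_ancilla_sum[OF assms]
  note N = controlled_negation_ancilla_sum[OF assms, folded P_def]
  let ?H = "single_gate m (Suc n) hadamard" and ?N = "circuit_apply (controlled_negation m n)"
  have "circuit_apply (hartley_mixer m n) (vec (2^m) (ancilla_sum n u (\<lambda>_. 0))) =
      ?H *\<^sub>v ?N (?H *\<^sub>v (single_gate m (Suc n) (phase_shift (pi / 2)) *\<^sub>v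
        (?H *\<^sub>v ?N (?H *\<^sub>v vec (2^m) (ancilla_sum n u (\<lambda>_. 0))))))"
    by (simp add: hartley_mixer_def)
  also have "?H *\<^sub>v ?N (?H *\<^sub>v vec (2^m) (ancilla_sum n u (\<lambda>_. 0))) =
      vec (2^m) (ancilla_sum n (\<lambda>j. (u j + u (P j)) / 2) (\<lambda>j. (u j - u (P j)) / 2))"
    by (simp add: H N cc distrib_left right_diff_distrib add_divide_distrib diff_divide_distrib)
  also have "?H *\<^sub>v ?N (?H *\<^sub>v (single_gate m (Suc n) (phase_shift (pi / 2)) *\<^sub>v
      vec (2^m) (ancilla_sum n (\<lambda>j. (u j + u (P j)) / 2) (\<lambda>j. (u j - u (P j)) / 2)))) =
      vec (2^m) (ancilla_sum n (\<lambda>j. (1 + \<i>) / 2 * u j + (1 - \<i>) / 2 * u (P j)) (\<lambda>_. 0))"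
    unfolding S cis_pi_half H N cc
    by (intro arg_cong[where f="vec _"] ancilla_sum_cong) (simp_all add: PP cc field_simps)
  finally show ?thesis
    by (simp add: P_def)
qed

definition hartley_circuit :: "nat \<Rightarrow> complex mat list" where
  "hartley_circuit n = hartley_mixer (Suc n) n @ qft_circuit (Suc n) (-1) n"

lemma hartley_circuit_apply:
  assumes "v \<in> carrier_vec (2^n)"
  shows "circuit_apply (hartley_circuit n) (embed (Suc n) v) = embed (Suc n) (hartley (2^n) *\<^sub>v v)"
proof -
  let ?w = "\<lambda>j. (1 + \<i>) / 2 * v $ j + (1 - \<i>) / 2 * v $ ((2^n - j) mod 2^n)"
  have "circuit_apply (hartley_circuit n) (embed (Suc n) v) =
      circuit_apply (qft_circuit (Suc n) (-1) n) (vec (2^Suc n) (ancilla_sum n ?w (\<lambda>_. 0)))"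
    unfolding hartley_circuit_def circuit_apply_append embed_eq_ancilla_sum[OF carrier_vecD[OF assms]]
      hartley_mixer_apply[OF lessI] ..
  also have "\<dots> = vec (2^Suc n) (ancilla_sum n (dft (-1) (2^n) ?w) (dft (-1) (2^n) (\<lambda>_. 0)))"
    unfolding qft_circuit_apply[OF le_SucI[OF order.refl] disjI2[OF refl]] block_dft_ancilla_sum ..
  also have "\<dots> = vec (2^Suc n) (ancilla_sum n (($) (hartley (2^n) *\<^sub>v v)) (\<lambda>_. 0))"
    using assms by (intro arg_cong[where f="vec _"] ancilla_sum_cong)
      (simp_all add: hartley_mult_vec_eq_dft dft_def)
  also have "\<dots> = embed (Suc n) (hartley (2^n) *\<^sub>v v)"
    by (simp add: embed_eq_ancilla_sum hartley_def)
  finally show ?thesis .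
qed

section \<open>Gate set and gate count\<close>

lemma elementary_controlled_phase:
  "p < m \<Longrightarrow> q < m \<Longrightarrow> p \<noteq> q \<Longrightarrow> elementary_circuit m (controlled_phase m \<theta> p q)"
  unfolding controlled_phase_def
  by (auto intro: elementary_gate_cnot_gate elementary_gate_single_gate unitary2_phase_shift)

lemma elementary_rotate_circuit: "n < m \<Longrightarrow> elementary_circuit m (rotate_circuit m n)"
  by (induction n) (auto simp: swap_circuit_def intro: elementary_gate_cnot_gate)

lemma elementary_phase_ladder:
  assumes "k \<le> n" "n < m"
  shows "elementary_circuit m (phase_ladder m a n k)"
proof -
  have "elementary_circuit m (controlled_phase m (2 * pi * a * 2^b) b n)" if "b < k" for b
    using that assms by (intro elementary_controlled_phase) auto
  then show ?thesis
    unfolding phase_ladder_def by auto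
qed

lemma elementary_qft_circuit: "n \<le> m \<Longrightarrow> elementary_circuit m (qft_circuit m s n)"
proof (induction n)
  case (Suc n)
  then have "n < m" by simp
  then show ?case
    using Suc elementary_rotate_circuit[OF \<open>n < m\<close>] elementary_phase_ladder[OF order.refl \<open>n < m\<close>]
      elementary_gate_single_gate[OF \<open>n < m\<close> unitary2_hadamard] by auto
qed simp

lemma elementary_controlled_negation:
  assumes "n < m"
  shows "elementary_circuit m (controlled_negation m n)"
proof -
  have "elementary_circuit m (controlled_complement m n n)"
    unfolding controlled_complement_def using assms by (auto intro: elementary_gate_cnot_gate)
  then show ?thesis
    unfolding controlled_negation_def controlled_increment_def
    using elementary_qft_circuit[OF less_imp_le[OF assms]] elementary_phase_ladder[OF order.refl assms]
    by auto
qed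

lemma elementary_hartley_circuit: "elementary_circuit (Suc n) (hartley_circuit n)"
  unfolding hartley_circuit_def hartley_mixer_def
  using elementary_qft_circuit[of n "Suc n"] elementary_controlled_negation[OF lessI]
    elementary_gate_single_gate[OF lessI unitary2_hadamard]
    elementary_gate_single_gate[OF lessI unitary2_phase_shift]
  by auto

lemma length_rotate_circuit: "length (rotate_circuit m n) = 3 * n"
  by (induction n) (simp_all add: swap_circuit_def)

lemma length_phase_ladder: "length (phase_ladder m a n k) = 5 * k"
  unfolding phase_ladder_def by (induction k) (simp_all add: controlled_phase_def)

lemma length_qft_circuit: "length (qft_circuit m s n) \<le> 4 * n^2"
  by (induction n) (simp_all add: length_rotate_circuit length_phase_ladder power2_eq_square)

lemma length_hartley_circuit:
  assumes "n \<ge> 1"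
  shows "length (hartley_circuit n) \<le> 37 * n^2"
proof -
  have "length (hartley_circuit n) \<le> 5 + 12 * n + 20 * n^2"
    using length_qft_circuit[of "Suc n" 1 n] length_qft_circuit[of "Suc n" "-1" n]
    by (simp add: hartley_circuit_def hartley_mixer_def controlled_negation_def
        controlled_complement_def controlled_increment_def length_phase_ladder)
  moreover have "n \<le> n^2" "1 \<le> n^2"
    using assms by (simp_all add: power2_eq_square)
  ultimately show ?thesis
    by linarith
qed

lemma circuit_mat_hartley_circuit:
  assumes "v \<in> carrier_vec (2^n)"
  shows "circuit_mat (Suc n) (hartley_circuit n) *\<^sub>v embed (Suc n) v =
    embed (Suc n) (hartley (2^n) *\<^sub>v v)"
proof -
  have "\<forall>G\<in>set (hartley_circuit n). G \<in> carrier_mat (2^Suc n) (2^Suc n)"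
    using elementary_hartley_circuit elementary_gate_carrier by blast
  moreover have "embed (Suc n) v \<in> carrier_vec (2^Suc n)"
    by (simp add: embed_def)
  ultimately show ?thesis
    by (simp only: circuit_mat_mult_vec hartley_circuit_apply[OF assms])
qed

theorem mainTheorem7:
  "\<exists>(c::real) (K::nat). c > 0 \<and>
     (\<forall>n::nat. n \<ge> 1 \<longrightarrow>
        (\<exists>k \<le> K. \<exists>gs :: complex mat list.
           real (length gs) \<le> c * real n ^ 2 \<and>
           (\<forall>G \<in> set gs. elementary_gate (n + 1 + k) G) \<and>
           (\<forall>v \<in> carrier_vec (2 ^ n).
              circuit_mat (n + 1 + k) gs *\<^sub>v embed (n + 1 + k) v
                = embed (n + 1 + k) (hartley (2 ^ n) *\<^sub>v v))))"
proof -
  have "\<exists>k\<le>0. \<exists>gs. real (length gs) \<le> 37 * real n ^ 2 \<and>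
      (\<forall>G\<in>set gs. elementary_gate (n + 1 + k) G) \<and>
      (\<forall>v\<in>carrier_vec (2 ^ n). circuit_mat (n + 1 + k) gs *\<^sub>v embed (n + 1 + k) v =
        embed (n + 1 + k) (hartley (2 ^ n) *\<^sub>v v))"
    if "n \<ge> 1" for n
  proof -
    have "real (length (hartley_circuit n)) \<le> 37 * real n ^ 2"
      using length_hartley_circuit[OF that] by (metis of_nat_le_iff of_nat_mult of_nat_numeral of_nat_power)
    then show ?thesis
      using elementary_hartley_circuit circuit_mat_hartley_circuit
      by (intro exI[of _ 0] exI[of _ "hartley_circuit n"]) auto
  qed
  then show ?thesis
    by (intro exI[of _ "37::real"] exI[of _ "0::nat"]) auto
qed

end
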